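(* Fix $p,r\in(0,1/36)$ with $\log p/\log r$ irrational, and let $h=1/2$, $a=1/3$. For $q\in(0,1/36)$ let $\mathcal S_q=\{S_1,\dots,S_6\}$ be the system on $\mathbb R$ given by $S_1(x)=px$, $S_2(x)=a+rx$, $S_3(x)=h-qx$, $S_4(x)=h-r+rx$, $S_5(x)=1-a-rx$, $S_6(x)=1-r+rx$, with attractor $K=K(q)$ and pieces $K_i=S_i(K)$. Then for Lebesgue almost all $q\in(0,1/36)$: $K_3\cap K_4=\{1/2\}$, $K_i\cap K_j=\varnothing$ for all other pairs $i\ne j$, and $\mathcal S_q$ does not satisfy the Weak Separation Property.
   Context: The attractor $K$ is the unique nonempty compact set with $K=\bigcup_{i=1}^6S_i(K)$. For a system $\{S_1,\dots,S_m\}$ of contracting similarities of $\mathbb R$, let $\mathcal F=\{S_{\mathbf i}^{-1}S_{\mathbf j}:\mathbf i,\mathbf j\in I^*\}$, where $I^*$ is the set of finite words over $\{1,\dots,m\}$ and $S_{j_1\dots j_k}=S_{j_1}\circ\dots\circ S_{j_k}$; the system satisfies the Weak Separation Property if $\mathrm{Id}\notin\overline{\mathcal F\setminus\{\mathrm{Id}\}}$, the closure taken in the space of affine maps of $\mathbb R$ with the topology of convergence of coefficients. *)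

theory Defs
  imports "HOL-Analysis.Analysis"
begin

text \<open>An affine map x |-> c*x + d of the real line is encoded by its coefficient pair (c, d);
  the topology on real \<times> real is then exactly convergence of coefficients.\<close>

definition affc :: "real \<times> real \<Rightarrow> real \<Rightarrow> real" where
  "affc f x = fst f * x + snd f"

definition acomp :: "real \<times> real \<Rightarrow> real \<times> real \<Rightarrow> real \<times> real" where
  "acomp f g = (fst f * fst g, fst f * snd g + snd f)"

definition ainv :: "real \<times> real \<Rightarrow> real \<times> real" where
  "ainv f = (1 / fst f, - snd f / fst f)"

text \<open>S_{j1...jk} = S_{j1} o ... o S_{jk}; the empty word gives the identity (1,0).\<close>
definition word_map :: "(nat \<Rightarrow> real \<times> real) \<Rightarrow> nat list \<Rightarrow> real \<times> real" where
  "word_map S w = foldr (\<lambda>i acc. acomp (S i) acc) w (1, 0)"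

definition WSP_family :: "nat \<Rightarrow> (nat \<Rightarrow> real \<times> real) \<Rightarrow> (real \<times> real) set" where
  "WSP_family m S = {acomp (ainv (word_map S u)) (word_map S v) | u v.
      set u \<subseteq> {1..m} \<and> set v \<subseteq> {1..m}}"

definition weak_separation :: "nat \<Rightarrow> (nat \<Rightarrow> real \<times> real) \<Rightarrow> bool" where
  "weak_separation m S \<longleftrightarrow> (1, 0) \<notin> closure (WSP_family m S - {(1, 0)})"

definition attractor :: "nat \<Rightarrow> (nat \<Rightarrow> real \<times> real) \<Rightarrow> real set" where
  "attractor m S = (THE K. K \<noteq> {} \<and> compact K \<and> K = (\<Union>i\<in>{1..m}. affc (S i) ` K))"

definition sysq :: "real \<Rightarrow> real \<Rightarrow> real \<Rightarrow> nat \<Rightarrow> real \<times> real" where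
  "sysq p r q i =
     (if i = 1 then (p, 0)
      else if i = 2 then (r, 1/3)
      else if i = 3 then (-q, 1/2)
      else if i = 4 then (r, 1/2 - r)
      else if i = 5 then (-r, 1 - 1/3)
      else (r, 1 - r))"

end

theory Submission
  imports Defs
begin

text \<open>
  The pieces \<open>K\<^sub>i\<close> lie in pairwise disjoint intervals of length \<open>1/36\<close>, except that
  the intervals of \<open>K\<^sub>3\<close> and \<open>K\<^sub>4\<close> meet at \<open>S\<^sub>3(0) = S\<^sub>4(1) = 1/2\<close>.
  Another common point \<open>1/2 - q a = 1/2 - r (1 - b)\<close> has \<open>a > 0\<close> and \<open>b < 1\<close>;
  peeling off the maps \<open>S\<^sub>1\<close> and \<open>S\<^sub>6\<close> turns it into a coincidence
  \<open>q p\<^sup>n a' = r\<^bsup>m+1\<^esub> (1 - b')\<close> with \<open>a', 1 - b' \<ge> 1/3\<close>.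
  Write \<open>a' = S\<^sub>w(t)\<close> and \<open>b' = S\<^sub>w\<^sub>'(s)\<close> with words of length \<open>k\<close>. The left side
  moves with \<open>q\<close> much faster than \<open>a'\<close> and \<open>b'\<close> do, so each pair of words allows only
  an interval of parameters of length \<open>\<rho>\<^sup>k\<close> with \<open>\<rho> < 1/36\<close>, and the \<open>36\<^sup>k\<close>
  pairs of words cover the exceptional parameters by sets of total length \<open>(36 \<rho>)\<^sup>k \<rightarrow> 0\<close>.

  Weak separation fails for every \<open>q\<close>: for the words \<open>u = 3 1\<^sup>n 5\<close> and
  \<open>v = 4 6\<^sup>m 2\<close> the map \<open>S\<^sub>u\<^sup>-\<^sup>1 S\<^sub>v\<close> has slope
  \<open>r\<^bsup>m+1\<^esub> / (q p\<^sup>n)\<close>, and since \<open>log p / log r\<close> is irrational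
  these slopes accumulate at \<open>1\<close>, where the maps tend to the identity.
\<close>

section \<open>Iterated function systems on the unit interval\<close>

definition word_eval :: "(nat \<Rightarrow> real \<times> real) \<Rightarrow> nat list \<Rightarrow> real \<Rightarrow> real" where
  "word_eval f w t = foldr (\<lambda>i x. affc (f i) x) w t"

lemma word_eval_Nil [simp]: "word_eval f [] t = t"
  and word_eval_Cons [simp]: "word_eval f (i # w) t = affc (f i) (word_eval f w t)"
  by (simp_all add: word_eval_def)

lemma affc_diff: "affc g x - affc g y = fst g * (x - y)"
  by (simp add: affc_def algebra_simps)

lemma continuous_on_affc [continuous_intros]: "continuous_on S (affc g)"
  unfolding affc_def by (intro continuous_intros)

lemma word_eval_in_unit:
  assumes "\<And>i x. i \<in> set w \<Longrightarrow> x \<in> {0..1} \<Longrightarrow> affc (f i) x \<in> {0..1}" and "t \<in> {0..1}"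
  shows "word_eval f w t \<in> {0..1}"
  using assms by (induction w) auto

lemma word_eval_lipschitz:
  assumes "0 \<le> \<rho>" and "\<And>i. i \<in> set w \<Longrightarrow> \<bar>fst (f i)\<bar> \<le> \<rho>"
  shows "\<bar>word_eval f w t - word_eval f w t'\<bar> \<le> \<rho> ^ length w * \<bar>t - t'\<bar>"
  using assms(2)
proof (induction w)
  case (Cons i w)
  have "\<bar>word_eval f (i # w) t - word_eval f (i # w) t'\<bar>
        = \<bar>fst (f i)\<bar> * \<bar>word_eval f w t - word_eval f w t'\<bar>"
    by (simp add: affc_diff abs_mult)
  also have "\<dots> \<le> \<rho> * (\<rho> ^ length w * \<bar>t - t'\<bar>)"
    using Cons assms(1) by (intro mult_mono) auto
  finally show ?case by simp
qed simp

lemma word_eval_perturbation: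
  assumes \<rho>: "0 \<le> \<rho>" "\<rho> \<le> 1/2" and \<epsilon>: "0 \<le> \<epsilon>" and t: "t \<in> {0..1}" "t' \<in> {0..1}"
    and into: "\<And>i x. i \<in> set w \<Longrightarrow> x \<in> {0..1} \<Longrightarrow> affc (f i) x \<in> {0..1} \<and> affc (g i) x \<in> {0..1}"
    and close: "\<And>i x y. i \<in> set w \<Longrightarrow> x \<in> {0..1} \<Longrightarrow> y \<in> {0..1} \<Longrightarrow>
        \<bar>affc (f i) x - affc (g i) y\<bar> \<le> \<epsilon> + \<rho> * \<bar>x - y\<bar>"
  shows "\<bar>word_eval f w t - word_eval g w t'\<bar> \<le> 2 * \<epsilon> + \<rho> ^ length w * \<bar>t - t'\<bar>"
  using into close
proof (induction w)
  case (Cons i w)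
  have "word_eval f w t \<in> {0..1}"
    by (rule word_eval_in_unit) (use Cons.prems(1) t in auto)
  moreover have "word_eval g w t' \<in> {0..1}"
    by (rule word_eval_in_unit) (use Cons.prems(1) t in auto)
  ultimately have "\<bar>word_eval f (i # w) t - word_eval g (i # w) t'\<bar>
      \<le> \<epsilon> + \<rho> * \<bar>word_eval f w t - word_eval g w t'\<bar>"
    using Cons.prems(2) by simp
  also have "\<dots> \<le> \<epsilon> + \<rho> * (2 * \<epsilon> + \<rho> ^ length w * \<bar>t - t'\<bar>)"
    using Cons \<rho> by (intro add_left_mono mult_left_mono) auto
  also have "\<dots> = \<epsilon> + 2 * \<rho> * \<epsilon> + \<rho> ^ length (i # w) * \<bar>t - t'\<bar>"
    by (simp add: algebra_simps)
  also have "\<dots> \<le> 2 * \<epsilon> + \<rho> ^ length (i # w) * \<bar>t - t'\<bar>"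
    using mult_right_mono[of "2 * \<rho>" 1 \<epsilon>] \<rho> \<epsilon> by simp
  finally show ?case .
qed (use \<epsilon> in simp)

definition hutchinson :: "nat \<Rightarrow> (nat \<Rightarrow> real \<times> real) \<Rightarrow> real set \<Rightarrow> real set" where
  "hutchinson m f A = (\<Union>i\<in>{1..m}. affc (f i) ` A)"

definition ifs_level :: "nat \<Rightarrow> (nat \<Rightarrow> real \<times> real) \<Rightarrow> nat \<Rightarrow> real set" where
  "ifs_level m f k = (hutchinson m f ^^ k) {0..1}"

definition ifs_limit :: "nat \<Rightarrow> (nat \<Rightarrow> real \<times> real) \<Rightarrow> real set" where
  "ifs_limit m f = (\<Inter>k. ifs_level m f k)"

lemma ifs_level_0 [simp]: "ifs_level m f 0 = {0..1}"
  and ifs_level_Suc [simp]: "ifs_level m f (Suc k) = hutchinson m f (ifs_level m f k)"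
  by (simp_all add: ifs_level_def)

lemma hutchinson_mono: "A \<subseteq> B \<Longrightarrow> hutchinson m f A \<subseteq> hutchinson m f B"
  unfolding hutchinson_def by blast

lemma ifs_level_word:
  assumes "x \<in> ifs_level m f k"
  obtains w t where "length w = k" "set w \<subseteq> {1..m}" "t \<in> {0..1}" "x = word_eval f w t"
  using assms
proof (induction k arbitrary: x thesis)
  case 0
  then show ?case by (metis ifs_level_0 empty_subsetI list.set(1) list.size(3) word_eval_Nil)
next
  case (Suc k)
  then obtain i y where "i \<in> {1..m}" "y \<in> ifs_level m f k" "x = affc (f i) y"
    by (auto simp: hutchinson_def)
  with Suc.IH[of y] show ?case
    by (metis Suc.prems(1) insert_subset length_Cons list.simps(15) word_eval_Cons)
qed

definition unit_excess :: "real \<Rightarrow> real" where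
  "unit_excess y = max 0 (max (- y) (y - 1))"

lemma inj_affc: "fst g \<noteq> 0 \<Longrightarrow> inj (affc g)"
  by (rule injI) (metis affc_diff mult_eq_0_iff right_minus_eq)

locale unit_ifs =
  fixes m :: nat and f :: "nat \<Rightarrow> real \<times> real" and \<rho> :: real
  assumes nonempty: "1 \<le> m"
    and ratio: "0 \<le> \<rho>" "\<rho> < 1"
    and contracting: "\<And>i. i \<in> {1..m} \<Longrightarrow> \<bar>fst (f i)\<bar> \<le> \<rho>"
    and nondegenerate: "\<And>i. i \<in> {1..m} \<Longrightarrow> fst (f i) \<noteq> 0"
    and maps_unit: "\<And>i x. i \<in> {1..m} \<Longrightarrow> x \<in> {0..1} \<Longrightarrow> affc (f i) x \<in> {0..1}"
begin

lemma hutchinson_unit: "hutchinson m f {0..1} \<subseteq> {0..1}"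
  using maps_unit by (auto simp: hutchinson_def)

lemma decseq_ifs_level: "decseq (ifs_level m f)"
  unfolding decseq_Suc_iff
proof
  show "ifs_level m f (Suc k) \<le> ifs_level m f k" for k
    by (induction k) (use hutchinson_unit hutchinson_mono in auto)
qed

lemma ifs_level_subset_unit: "ifs_level m f k \<subseteq> {0..1}"
  using decseqD[OF decseq_ifs_level, of 0 k] by simp

lemma compact_ifs_level: "compact (ifs_level m f k)"
  by (induction k) (auto simp: hutchinson_def intro!: compact_continuous_image continuous_on_affc)

lemma ifs_level_nonempty: "ifs_level m f k \<noteq> {}"
  by (induction k) (use nonempty in \<open>auto simp: hutchinson_def\<close>)

lemma ifs_limit_subset_unit: "ifs_limit m f \<subseteq> {0..1}"
  using ifs_level_subset_unit unfolding ifs_limit_def by blast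

lemma ifs_limit_nonempty: "ifs_limit m f \<noteq> {}"
  unfolding ifs_limit_def
  by (rule compact_nest[OF compact_ifs_level ifs_level_nonempty]) (rule decseqD[OF decseq_ifs_level])

lemma compact_ifs_limit: "compact (ifs_limit m f)"
  unfolding ifs_limit_def
  by (intro compact_Inter) (auto intro: compact_ifs_level)

lemma unit_excess_contract:
  assumes i: "i \<in> {1..m}" shows "unit_excess (affc (f i) y) \<le> \<rho> * unit_excess y"
proof -
  have slope: "\<bar>fst (f i)\<bar> \<le> \<rho>" using contracting[OF i] .
  have shift: "unit_excess (u + v) \<le> unit_excess u + \<bar>v\<bar>" for u v
    unfolding unit_excess_def by auto
  have "unit_excess (affc (f i) y) \<le> \<bar>fst (f i) * (y - c)\<bar>" if "c \<in> {0..1}" for c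
  proof -
    have "affc (f i) y = affc (f i) c + fst (f i) * (y - c)"
      by (simp add: affc_def algebra_simps)
    moreover have "unit_excess (affc (f i) c) = 0"
      using maps_unit[OF i that] by (simp add: unit_excess_def)
    ultimately show ?thesis using shift[of "affc (f i) c" "fst (f i) * (y - c)"] by simp
  qed
  moreover have "\<bar>y - max 0 (min 1 y)\<bar> = unit_excess y"
    by (auto simp: unit_excess_def)
  ultimately have "unit_excess (affc (f i) y) \<le> \<bar>fst (f i)\<bar> * unit_excess y"
    by (metis abs_mult atLeastAtMost_iff max.cobounded1 max.bounded_iff min.cobounded1 zero_le_one)
  also have "\<dots> \<le> \<rho> * unit_excess y"
    using slope by (intro mult_right_mono) (auto simp: unit_excess_def)
  finally show ?thesis .
qed

lemma hutchinson_ifs_limit_subset: "hutchinson m f (ifs_limit m f) \<subseteq> ifs_limit m f"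
proof -
  have "hutchinson m f (ifs_limit m f) \<subseteq> ifs_level m f k" for k
  proof (cases k)
    case 0
    then show ?thesis using hutchinson_mono[OF ifs_limit_subset_unit] hutchinson_unit by auto
  next
    case (Suc k')
    have "ifs_limit m f \<subseteq> ifs_level m f k'" unfolding ifs_limit_def by blast
    then show ?thesis using Suc hutchinson_mono by auto
  qed
  then show ?thesis unfolding ifs_limit_def by blast
qed

lemma ifs_limit_subset_hutchinson: "ifs_limit m f \<subseteq> hutchinson m f (ifs_limit m f)"
proof
  fix x assume x: "x \<in> ifs_limit m f"
  \<comment> \<open>Some single map reaches \<open>x\<close> from every level, since the levels decrease and there are
    finitely many maps; being injective, it then has one preimage of \<open>x\<close> in all levels.\<close>
  define hit where "hit i k \<longleftrightarrow> x \<in> affc (f i) ` ifs_level m f k" for i k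
  have hit_some: "\<exists>i\<in>{1..m}. hit i k" for k
  proof -
    have "x \<in> ifs_level m f (Suc k)" using x unfolding ifs_limit_def by blast
    then show ?thesis unfolding hit_def by (auto simp: hutchinson_def)
  qed
  have hit_antimono: "hit i k'" if "hit i k" "k' \<le> k" for i k k'
    using that decseqD[OF decseq_ifs_level] unfolding hit_def by blast
  obtain i where i: "i \<in> {1..m}" "\<And>k. hit i k"
  proof (rule ccontr)
    assume "\<not> thesis"
    then have "\<forall>i\<in>{1..m}. \<exists>k. \<not> hit i k" using that by blast
    then obtain miss where miss: "\<And>i. i \<in> {1..m} \<Longrightarrow> \<not> hit i (miss i)" by metis
    obtain i where i: "i \<in> {1..m}" "hit i (Max (miss ` {1..m}))" using hit_some by blast
    have "miss i \<le> Max (miss ` {1..m})" using i(1) by simp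
    then show False using hit_antimono[OF i(2)] miss[OF i(1)] by blast
  qed
  obtain y where y: "y \<in> {0..1}" "x = affc (f i) y"
    using i(2)[of 0] unfolding hit_def by auto
  have "y \<in> ifs_level m f k" for k
  proof -
    obtain y' where "y' \<in> ifs_level m f k" "x = affc (f i) y'"
      using i(2)[of k] unfolding hit_def by blast
    with y(2) inj_affc[OF nondegenerate[OF i(1)]] show ?thesis by (metis injD)
  qed
  then show "x \<in> hutchinson m f (ifs_limit m f)"
    using i(1) y(2) unfolding ifs_limit_def hutchinson_def by blast
qed

lemma hutchinson_ifs_limit: "hutchinson m f (ifs_limit m f) = ifs_limit m f"
  using hutchinson_ifs_limit_subset ifs_limit_subset_hutchinson by (rule equalityI)

lemma invariant_subset_unit:
  assumes "K \<noteq> {}" "compact K" "hutchinson m f K = K"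
  shows "K \<subseteq> {0..1}"
proof -
  have "continuous_on K unit_excess" unfolding unit_excess_def by (intro continuous_intros)
  then obtain x where x: "x \<in> K" "\<forall>y\<in>K. unit_excess y \<le> unit_excess x"
    using continuous_attains_sup[OF assms(2,1)] by blast
  then obtain i y where iy: "i \<in> {1..m}" "y \<in> K" "x = affc (f i) y"
    using assms(3) unfolding hutchinson_def by blast
  have "unit_excess x \<le> \<rho> * unit_excess x"
    using unit_excess_contract[OF iy(1), of y] x(2) iy ratio(1)
    by (metis mult_left_mono order.trans)
  then have "(1 - \<rho>) * unit_excess x \<le> 0" by (simp add: algebra_simps)
  then have "unit_excess x \<le> 0"
    using ratio by (simp add: mult_le_0_iff)
  then show ?thesis
    using x(2) by (force simp: unit_excess_def)
qed

lemma invariant_eq_ifs_limit: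
  assumes K: "K \<noteq> {}" "compact K" "hutchinson m f K = K"
  shows "K = ifs_limit m f"
proof
  have "K \<subseteq> ifs_level m f k" for k
  proof (induction k)
    case 0 then show ?case using invariant_subset_unit[OF K] by simp
  next
    case (Suc k) then show ?case using hutchinson_mono[OF Suc.IH, of m f] K(3) by simp
  qed
  then show "K \<subseteq> ifs_limit m f" unfolding ifs_limit_def by blast
next
  have word_closed: "word_eval f w y \<in> K" if "set w \<subseteq> {1..m}" "y \<in> K" for w y
    using that
  proof (induction w)
    case (Cons i w)
    then have "affc (f i) (word_eval f w y) \<in> hutchinson m f K" by (auto simp: hutchinson_def)
    then show ?case using K(3) by simp
  qed simp
  show "ifs_limit m f \<subseteq> K"
  proof
    fix x assume x: "x \<in> ifs_limit m f"
    obtain y0 where y0: "y0 \<in> K" using K(1) by blast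
    have "\<exists>y\<in>K. dist y x < e" if e: "e > 0" for e
    proof -
      obtain k where k: "\<rho> ^ k < e" using real_arch_pow_inv[OF e ratio(2)] by blast
      obtain w t where w: "length w = k" "set w \<subseteq> {1..m}" "t \<in> {0..1}" "x = word_eval f w t"
        using x ifs_level_word unfolding ifs_limit_def by blast
      have "dist (word_eval f w y0) x \<le> \<rho> ^ k * \<bar>y0 - t\<bar>"
        using word_eval_lipschitz[OF ratio(1), of w f y0 t] w(1,2,4) contracting
        by (auto simp: dist_real_def subset_iff)
      also have "\<dots> \<le> \<rho> ^ k"
        using invariant_subset_unit[OF K] y0 w(3) ratio by (intro mult_left_le) force+
      finally show ?thesis using k word_closed[OF w(2) y0] by (meson order.strict_trans1)
    qed
    then show "x \<in> K"
      using closed_approachable[OF compact_imp_closed[OF K(2)]] by blast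
  qed
qed

lemma fixed_point_in_ifs_limit:
  assumes "i \<in> {1..m}" "z \<in> {0..1}" "affc (f i) z = z"
  shows "z \<in> ifs_limit m f"
proof -
  have "z \<in> ifs_level m f k" for k
  proof (induction k)
    case (Suc k)
    then have "affc (f i) z \<in> hutchinson m f (ifs_level m f k)"
      using assms(1) by (auto simp: hutchinson_def)
    then show ?case using assms(3) by simp
  qed (use assms(2) in simp)
  then show ?thesis unfolding ifs_limit_def by blast
qed

lemma attractor_eq_ifs_limit: "attractor m f = ifs_limit m f"
  unfolding attractor_def
proof (rule the_equality)
  show "ifs_limit m f \<noteq> {} \<and> compact (ifs_limit m f) \<and>
      ifs_limit m f = (\<Union>i\<in>{1..m}. affc (f i) ` ifs_limit m f)"
    using ifs_limit_nonempty compact_ifs_limit hutchinson_ifs_limit by (simp add: hutchinson_def)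
  show "K = ifs_limit m f" if "K \<noteq> {} \<and> compact K \<and> K = (\<Union>i\<in>{1..m}. affc (f i) ` K)" for K
    using that invariant_eq_ifs_limit by (simp add: hutchinson_def)
qed

end

lemma acomp_assoc: "acomp (acomp f g) h = acomp f (acomp g h)"
  by (simp add: acomp_def algebra_simps)

lemma word_map_Nil [simp]: "word_map S [] = (1, 0)"
  and word_map_Cons [simp]: "word_map S (i # w) = acomp (S i) (word_map S w)"
  by (simp_all add: word_map_def)

lemma word_map_append: "word_map S (u @ v) = acomp (word_map S u) (word_map S v)"
  by (induction u) (simp_all add: acomp_assoc, simp add: acomp_def)

lemma acomp_ainv_conjugate:
  assumes "L \<noteq> 0" "r \<noteq> 0"
  shows "acomp (ainv (L * r, 1/2 - 2/3 * L)) (R * r, 1/2 - 2/3 * R) = (R / L, 2 * (1 - R / L) / (3 * r))"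
  using assms by (simp add: acomp_def ainv_def field_simps)

text \<open>
  Subtracting the two equations gives \<open>(q\<^sub>2 - q\<^sub>1) P a\<^sub>2 = R (b\<^sub>2 - b\<^sub>1) + q\<^sub>1 P (a\<^sub>1 - a\<^sub>2)\<close>,
  and \<open>R \<le> 3 q\<^sub>1 P\<close>; as \<open>q\<^sub>1 < 1/36\<close> the right side is at most \<open>P (2 (q\<^sub>2 - q\<^sub>1) + E) / 9\<close>.
\<close>
lemma transversality_bound:
  fixes q1 q2 P R a1 a2 b1 b2 E :: real
  assumes eq1: "q1 * P * a1 = R * b1" and eq2: "q2 * P * a2 = R * b2"
    and q: "0 < q1" "q1 \<le> q2" "q1 < 1/36" and PR: "0 < P" "0 \<le> R"
    and ab: "a1 \<le> 1" "1/3 \<le> a2" "1/3 \<le> b1"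
    and a_close: "\<bar>a1 - a2\<bar> \<le> 2 * (q2 - q1) + E" and b_close: "\<bar>b1 - b2\<bar> \<le> 2 * (q2 - q1) + E"
  shows "q2 - q1 \<le> E"
proof -
  define d where "d = q2 - q1"
  have R: "R \<le> 3 * q1 * P"
    using mult_left_mono[OF ab(3) PR(2)] mult_left_mono[OF ab(1), of "q1 * P"] eq1 q PR by simp
  have "d * P * a2 = R * (b2 - b1) + q1 * P * (a1 - a2)"
    unfolding d_def using eq1 eq2 by (simp add: algebra_simps)
  also have "\<dots> \<le> R * \<bar>b1 - b2\<bar> + q1 * P * \<bar>a1 - a2\<bar>"
    using PR q by (intro add_mono mult_left_mono) auto
  also have "\<dots> \<le> 3 * q1 * P * (2 * d + E) + q1 * P * (2 * d + E)"
    using R PR q a_close b_close unfolding d_def by (intro add_mono mult_mono mult_left_mono) auto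
  also have "\<dots> = 4 * q1 * (P * (2 * d + E))"
    by (simp add: algebra_simps)
  also have "\<dots> \<le> 4 * (1/36) * (P * (2 * d + E))"
    using q PR b_close unfolding d_def by (intro mult_right_mono) (auto intro: order_trans[OF abs_ge_zero])
  also have "\<dots> = P * (2 * d + E) / 9"
    by simp
  finally have "d * P * a2 \<le> P * (2 * d + E) / 9" .
  moreover have "d * P / 3 \<le> d * P * a2"
    using mult_left_mono[OF ab(2), of "d * P"] q PR unfolding d_def by simp
  ultimately have "P * d \<le> P * E" by (simp add: field_simps)
  then show ?thesis unfolding d_def using PR by simp
qed

lemma power_descent:
  fixes K :: "real set" and c \<theta> :: real
  assumes K: "K \<subseteq> {0..1}" and c: "0 < c" "c < 1"
    and step: "\<And>x. x \<in> K \<Longrightarrow> \<theta> \<le> x \<or> (\<exists>z\<in>K. x = c * z)"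
    and y: "y \<in> K" "0 < y"
  obtains n a where "a \<in> K" "\<theta> \<le> a" "y = c ^ n * a"
proof -
  obtain N where "c ^ N < y" using real_arch_pow_inv[OF y(2) c(2)] by blast
  have "\<exists>n a. a \<in> K \<and> \<theta> \<le> a \<and> x = c ^ n * a" if "x \<in> K" "c ^ N < x" for x
    using that
  proof (induction N arbitrary: x)
    case 0
    then show ?case using K by auto
  next
    case (Suc N)
    from step[OF Suc.prems(1)] show ?case
    proof
      assume "\<theta> \<le> x"
      then show ?thesis using Suc.prems(1) by (metis mult_1 power_0)
    next
      assume "\<exists>z\<in>K. x = c * z"
      then obtain z where z: "z \<in> K" "x = c * z" by blast
      then have "c ^ N < z" using Suc.prems(2) c(1) by simp
      then obtain n a where "a \<in> K" "\<theta> \<le> a" "z = c ^ n * a" using Suc.IH z(1) by blast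
      then show ?thesis using z(2) by (metis mult.assoc power_Suc)
    qed
  qed
  then show thesis using that y(1) \<open>c ^ N < y\<close> by blast
qed

lemma irrational_multiple_approx:
  fixes \<theta> x \<epsilon> :: real
  assumes \<theta>: "0 < \<theta>" "\<theta> \<notin> \<rat>" and \<epsilon>: "0 < \<epsilon>"
  obtains n M :: nat where "1 \<le> M" "\<bar>real n * \<theta> - real M - x\<bar> < \<epsilon>"
proof -
  \<comment> \<open>Approximating \<open>x - J\<theta>\<close> instead of \<open>x\<close> makes the integer part found below positive.\<close>
  define J where "J = nat \<lceil>(x + \<epsilon>) / \<theta>\<rceil>"
  have J: "x + \<epsilon> \<le> real J * \<theta>"
  proof -
    have "(x + \<epsilon>) / \<theta> \<le> real J" unfolding J_def by linarith
    then show ?thesis using \<theta>(1) by (simp add: field_simps)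
  qed
  obtain h k :: int where k: "0 < k" and hk: "\<bar>of_int k * \<theta> - of_int h - (x - real J * \<theta>)\<bar> < \<epsilon>"
    using sequence_of_fractional_parts_is_dense[OF \<theta>(2) \<epsilon>] by blast
  define n where "n = nat k + J"
  have n: "real n * \<theta> = of_int k * \<theta> + real J * \<theta>" unfolding n_def using k by (simp add: algebra_simps)
  have "0 < of_int k * \<theta>" using k \<theta> by simp
  then have "0 < real_of_int h" using hk J by linarith
  then have h: "1 \<le> h" by simp
  have "\<bar>real n * \<theta> - real (nat h) - x\<bar> < \<epsilon>" using hk h unfolding n by simp
  then show thesis using that[of "nat h" n] h by simp
qed

lemma irrational_combination_dense:
  fixes \<alpha> \<beta> t \<delta> :: real
  assumes \<alpha>: "0 < \<alpha>" and \<beta>: "0 < \<beta>" and irr: "\<beta> / \<alpha> \<notin> \<rat>" and \<delta>: "0 < \<delta>"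
  obtains n M :: nat where "1 \<le> M" "t - \<delta> < real n * \<beta> - real M * \<alpha>" "real n * \<beta> - real M * \<alpha> < t"
proof -
  have "0 < \<beta> / \<alpha>" "0 < \<delta> / (2 * \<alpha>)" using \<alpha> \<beta> \<delta> by simp_all
  then obtain n M :: nat where M: "1 \<le> M"
    and close: "\<bar>real n * (\<beta> / \<alpha>) - real M - (t - \<delta>/2) / \<alpha>\<bar> < \<delta> / (2 * \<alpha>)"
    using irrational_multiple_approx[of "\<beta> / \<alpha>" "\<delta> / (2 * \<alpha>)" "(t - \<delta>/2) / \<alpha>"] irr by blast
  have "real n * (\<beta> / \<alpha>) - real M - (t - \<delta>/2) / \<alpha> = (real n * \<beta> - real M * \<alpha> - (t - \<delta>/2)) / \<alpha>"
    using \<alpha> by (simp add: field_simps)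
  with close \<alpha> have less: "\<bar>real n * \<beta> - real M * \<alpha> - (t - \<delta>/2)\<bar> / \<alpha> < \<delta> / (2 * \<alpha>)"
    by (simp add: abs_divide)
  have "\<bar>real n * \<beta> - real M * \<alpha> - (t - \<delta>/2)\<bar>
      = \<alpha> * (\<bar>real n * \<beta> - real M * \<alpha> - (t - \<delta>/2)\<bar> / \<alpha>)"
    using \<alpha> by simp
  also have "\<dots> < \<alpha> * (\<delta> / (2 * \<alpha>))" using less \<alpha> by (rule mult_strict_left_mono)
  also have "\<dots> = \<delta>/2" using \<alpha> by simp
  finally have "\<bar>real n * \<beta> - real M * \<alpha> - (t - \<delta>/2)\<bar> < \<delta>/2" .
  then have "t - \<delta> < real n * \<beta> - real M * \<alpha>" "real n * \<beta> - real M * \<alpha> < t"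
    by linarith+
  then show thesis using that[OF M] by blast
qed

lemma power_ratio_dense:
  fixes p r q e :: real
  assumes p: "0 < p" "p < 1" and r: "0 < r" "r < 1" and irr: "ln p / ln r \<notin> \<rat>"
    and q: "0 < q" and e: "0 < e"
  obtains n M :: nat where "1 \<le> M" "1 - e < r ^ M / (q * p ^ n)" "r ^ M / (q * p ^ n) < 1"
proof -
  have "0 < - ln r" "0 < - ln p" "- ln p / - ln r \<notin> \<rat>" using p r irr by simp_all
  then obtain n M :: nat where M: "1 \<le> M"
    and lo: "ln q - e < real n * - ln p - real M * - ln r" and hi: "real n * - ln p - real M * - ln r < ln q"
    using irrational_combination_dense[of "- ln r" "- ln p" e "ln q"] e by blast
  have ratio: "r ^ M / (q * p ^ n) = exp (real n * - ln p - real M * - ln r - ln q)"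
    using p r q by (simp add: exp_diff exp_add exp_of_nat_mult exp_minus field_simps)
  have "1 - e \<le> exp (- e)" using exp_ge_add_one_self[of "- e"] by simp
  also have "\<dots> < r ^ M / (q * p ^ n)" unfolding ratio using lo by simp
  finally have "1 - e < r ^ M / (q * p ^ n)" .
  moreover have "r ^ M / (q * p ^ n) < 1" unfolding ratio using hi by simp
  ultimately show thesis using that M by blast
qed

section \<open>The system \<open>sysq\<close>\<close>

definition piece_lo :: "nat \<Rightarrow> real" where
  "piece_lo i = (if i = 1 then 0 else if i = 2 then 1/3 else if i = 3 \<or> i = 4 then 1/2 - 1/36
     else if i = 5 then 2/3 - 1/36 else 1 - 1/36)"

definition piece_hi :: "nat \<Rightarrow> real" where
  "piece_hi i = (if i = 1 then 1/36 else if i = 2 then 1/3 + 1/36 else if i = 3 \<or> i = 4 then 1/2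
     else if i = 5 then 2/3 else 1)"

lemma piece_intervals_separated:
  assumes "i \<in> {1..6}" "j \<in> {1..6}" "i \<noteq> j" "{i, j} \<noteq> {3, 4}"
  shows "piece_hi i < piece_lo j \<or> piece_hi j < piece_lo i"
proof -
  have "i \<in> {1, 2, 3, 4, 5, 6}" "j \<in> {1, 2, 3, 4, 5, 6}" using assms(1,2) by auto
  then show ?thesis using assms(3,4) by (auto simp: piece_lo_def piece_hi_def)
qed

lemma word_map_replicate_1: "word_map (sysq p r q) (replicate n 1) = (p ^ n, 0)"
  by (induction n) (simp_all add: acomp_def sysq_def)

lemma word_map_replicate_6: "word_map (sysq p r q) (replicate n 6) = (r ^ n, 1 - r ^ n)"
  by (induction n) (simp_all add: acomp_def sysq_def algebra_simps)

locale sysq_params =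
  fixes p r :: real
  assumes p: "0 < p" "p < 1/36" and r: "0 < r" "r < 1/36"
begin

lemma sysq_piece_bounds:
  assumes q: "0 < q" "q < 1/36" and x: "x \<in> {0..1}"
  shows "piece_lo i \<le> affc (sysq p r q i) x \<and> affc (sysq p r q i) x \<le> piece_hi i"
proof -
  have products: "p * x \<le> p" "r * x \<le> r" "q * x \<le> q" "0 \<le> p * x" "0 \<le> r * x" "0 \<le> q * x"
    using p r q x by (auto intro!: mult_left_le)
  show ?thesis
    using p r q x by (auto simp: sysq_def affc_def piece_lo_def piece_hi_def) (use products in linarith)+
qed

lemma sysq_maps_unit:
  assumes "0 < q" "q < 1/36" "x \<in> {0..1}"
  shows "affc (sysq p r q i) x \<in> {0..1}"
proof -
  have "0 \<le> piece_lo i" "piece_hi i \<le> 1" by (auto simp: piece_lo_def piece_hi_def)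
  then show ?thesis using sysq_piece_bounds[OF assms, of i] by auto
qed

lemma sysq_slope_bound:
  assumes "p \<le> \<rho>" "r \<le> \<rho>" "0 < q" "q \<le> \<rho>"
  shows "\<bar>fst (sysq p r q i)\<bar> \<le> \<rho>"
  using assms p r by (simp add: sysq_def)

lemma unit_ifs_sysq:
  assumes "0 < q" "q < 1/36"
  shows "unit_ifs 6 (sysq p r q) (1/36)"
proof
  show "\<bar>fst (sysq p r q i)\<bar> \<le> 1/36" for i
    using sysq_slope_bound[of "1/36" q i] assms p r by simp
  show "fst (sysq p r q i) \<noteq> 0" for i
    using assms p r by (simp add: sysq_def)
  show "affc (sysq p r q i) x \<in> {0..1}" if "x \<in> {0..1}" for i x
    using sysq_maps_unit[OF assms that] .
qed auto

lemma sysq_word_eval_perturbation: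
  assumes \<rho>: "p \<le> \<rho>" "r \<le> \<rho>" "\<rho> < 1/36" and q: "0 < q" "q \<le> \<rho>" "0 < q'" "q' \<le> \<rho>"
    and t: "t \<in> {0..1}" "t' \<in> {0..1}"
  shows "\<bar>word_eval (sysq p r q) w t - word_eval (sysq p r q') w t'\<bar>
    \<le> 2 * \<bar>q - q'\<bar> + \<rho> ^ length w * \<bar>t - t'\<bar>"
proof (rule word_eval_perturbation)
  show "affc (sysq p r q i) x \<in> {0..1} \<and> affc (sysq p r q' i) x \<in> {0..1}" if "x \<in> {0..1}" for i x
    using sysq_maps_unit \<rho> q that by simp
  show "\<bar>affc (sysq p r q i) x - affc (sysq p r q' i) y\<bar> \<le> \<bar>q - q'\<bar> + \<rho> * \<bar>x - y\<bar>"
    if "x \<in> {0..1}" "y \<in> {0..1}" for i x y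
  proof (cases "i = 3")
    case True
    have "affc (sysq p r q i) x - affc (sysq p r q' i) y = (q' - q) * x + q' * (y - x)"
      using True by (simp add: sysq_def affc_def algebra_simps)
    also have "\<bar>\<dots>\<bar> \<le> \<bar>q - q'\<bar> * 1 + \<rho> * \<bar>x - y\<bar>"
      using that q by (intro abs_triangle_ineq[THEN order_trans] add_mono)
        (auto simp: abs_mult abs_minus_commute intro!: mult_mono mult_left_le)
    finally show ?thesis by simp
  next
    case False
    then have "affc (sysq p r q i) x - affc (sysq p r q' i) y = fst (sysq p r q i) * (x - y)"
      by (simp add: sysq_def affc_diff)
    also have "\<bar>\<dots>\<bar> \<le> \<rho> * \<bar>x - y\<bar>"
      using sysq_slope_bound[of \<rho> q i] \<rho> q by (simp add: abs_mult mult_right_mono)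
    finally show ?thesis by simp
  qed
qed (use \<rho> p t in auto)

lemma sysq_ratio_map_in_WSP_family:
  assumes q: "0 < q" and M: "1 \<le> M"
  shows "(r ^ M / (q * p ^ n), 2 * (1 - r ^ M / (q * p ^ n)) / (3 * r)) \<in> WSP_family 6 (sysq p r q)"
proof -
  \<comment> \<open>Both words act as \<open>x \<mapsto> 1/2 - \<lambda> (2/3 - r x)\<close>, with \<open>\<lambda> = q p\<^sup>n\<close> resp. \<open>\<lambda> = r\<^sup>M\<close>.\<close>
  define u :: "nat list" where "u = 3 # replicate n 1 @ [5]"
  define v :: "nat list" where "v = 4 # replicate (M - 1) 6 @ [2]"
  have u: "word_map (sysq p r q) u = (q * p ^ n * r, 1/2 - 2/3 * (q * p ^ n))"
    unfolding u_def word_map_Cons word_map_append word_map_replicate_1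
    by (simp add: acomp_def sysq_def)
  have v: "word_map (sysq p r q) v = (r ^ M * r, 1/2 - 2/3 * r ^ M)"
    using M unfolding v_def word_map_Cons word_map_append word_map_replicate_6
    by (simp add: acomp_def sysq_def algebra_simps flip: power_Suc)
  have "acomp (ainv (word_map (sysq p r q) u)) (word_map (sysq p r q) v) \<in> WSP_family 6 (sysq p r q)"
    unfolding WSP_family_def by (intro CollectI exI[of _ u] exI[of _ v]) (auto simp: u_def v_def)
  moreover have "acomp (ainv (word_map (sysq p r q) u)) (word_map (sysq p r q) v)
      = (r ^ M / (q * p ^ n), 2 * (1 - r ^ M / (q * p ^ n)) / (3 * r))"
    unfolding u v by (rule acomp_ainv_conjugate) (use p r q in simp_all)
  ultimately show ?thesis by simp
qed

lemma sysq_not_weak_separation: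
  assumes irr: "ln p / ln r \<notin> \<rat>" and q: "0 < q" "q < 1/36"
  shows "\<not> weak_separation 6 (sysq p r q)"
proof -
  define C where "C = 1 + 2 / (3 * r)"
  have C: "0 < C" unfolding C_def using r by (simp add: add_pos_pos)
  have "\<exists>y\<in>WSP_family 6 (sysq p r q) - {(1, 0)}. dist y (1, 0) < e" if e: "0 < e" for e
  proof -
    have "p < 1" "r < 1" "0 < e / C" using p r e C by simp_all
    then obtain n M :: nat where M: "1 \<le> M" and c: "1 - e / C < r ^ M / (q * p ^ n)" "r ^ M / (q * p ^ n) < 1"
      using power_ratio_dense[OF p(1) _ r(1) _ irr q(1)] by blast
    define c where "c = r ^ M / (q * p ^ n)"
    have c_bounds: "1 - e / C < c" "c < 1" using c unfolding c_def by simp_all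
    define y where "y = (c, 2 * (1 - c) / (3 * r))"
    have "y \<in> WSP_family 6 (sysq p r q)"
      unfolding y_def c_def using sysq_ratio_map_in_WSP_family[OF q(1) M] .
    moreover have "y \<noteq> (1, 0)" using c_bounds(2) unfolding y_def by simp
    moreover have "dist y (1, 0) < e"
    proof -
      have "dist y (1, 0) \<le> \<bar>c - 1\<bar> + \<bar>2 * (1 - c) / (3 * r)\<bar>"
        unfolding y_def dist_Pair_Pair dist_real_def power2_abs diff_zero by (rule sqrt_sum_squares_le_sum_abs)
      also have "\<dots> = (1 - c) * C" unfolding C_def using c_bounds(2) r by (simp add: field_simps)
      also have "\<dots> < e" using c_bounds(1) C by (simp add: field_simps)
      finally show ?thesis .
    qed
    ultimately show ?thesis by blast
  qed
  then show ?thesis unfolding weak_separation_def closure_approachable by simp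
qed

end

section \<open>The exceptional parameters\<close>

definition q_cutoff :: "nat \<Rightarrow> real" where
  "q_cutoff j = 1/36 - 1 / (real j + 37)"

definition ratio_cutoff :: "real \<Rightarrow> real \<Rightarrow> nat \<Rightarrow> real" where
  "ratio_cutoff p r j = max (max p r) (q_cutoff j)"

definition sysq_words :: "nat \<Rightarrow> nat list set" where
  "sysq_words k = {w. set w \<subseteq> {1..6} \<and> length w = k}"

text \<open>
  The parameters \<open>q\<close> for which \<open>K\<^sub>3\<close> and \<open>K\<^sub>4\<close> could share the point
  \<open>1/2 - q p\<^sup>n a = 1/2 - r\<^bsup>m+1\<^esub> (1 - b)\<close>, with \<open>a\<close> and \<open>b\<close> seen through the words
  \<open>w\<close> and \<open>w'\<close>. The cutoff \<open>q \<le> q_cutoff j\<close> keeps all contraction ratios below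
  \<open>ratio_cutoff p r j < 1/36\<close>.
\<close>
definition coincidences :: "real \<Rightarrow> real \<Rightarrow> nat \<Rightarrow> nat \<Rightarrow> nat \<Rightarrow> nat list \<Rightarrow> nat list \<Rightarrow> real set" where
  "coincidences p r n m j w w' = {q. 0 < q \<and> q \<le> q_cutoff j \<and> (\<exists>t\<in>{0..1}. \<exists>s\<in>{0..1}.
     1/3 \<le> word_eval (sysq p r q) w t \<and> 1/3 \<le> 1 - word_eval (sysq p r q) w' s \<and>
     q * p ^ n * word_eval (sysq p r q) w t = r ^ Suc m * (1 - word_eval (sysq p r q) w' s))}"

text \<open>If \<open>coincidences\<close> is empty, \<open>Inf {}\<close> is some unspecified real; the interval is harmless.\<close>
definition coincidence_cover :: "real \<Rightarrow> real \<Rightarrow> nat \<Rightarrow> nat \<Rightarrow> nat \<Rightarrow> nat \<Rightarrow> real set" where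
  "coincidence_cover p r n m j k = (\<Union>(w, w') \<in> sysq_words k \<times> sysq_words k.
     {Inf (coincidences p r n m j w w') .. Inf (coincidences p r n m j w w') + ratio_cutoff p r j ^ k})"

definition exceptional_params :: "real \<Rightarrow> real \<Rightarrow> real set" where
  "exceptional_params p r = (\<Union>(n, m, j). \<Inter>k. coincidence_cover p r n m j k)"

lemma q_cutoff_bounds: "0 < q_cutoff j" "q_cutoff j < 1/36"
  unfolding q_cutoff_def by (auto simp: field_simps)

lemma exists_q_cutoff:
  assumes "q < 1/36" obtains j where "q \<le> q_cutoff j"
proof -
  obtain j :: nat where "1 / (1/36 - q) < real j" using reals_Archimedean2 by blast
  then have "1 / (real j + 37) \<le> 1/36 - q"
    using assms by (simp add: field_simps)
  then show thesis using that[of j] by (simp add: q_cutoff_def)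
qed

lemma card_sysq_words: "card (sysq_words k) = 6 ^ k"
  unfolding sysq_words_def by (subst card_lists_length_eq) simp_all

lemma finite_sysq_words: "finite (sysq_words k)"
  unfolding sysq_words_def by (rule finite_lists_length_eq) simp

context sysq_params
begin

lemma ratio_cutoff_bounds:
  "p \<le> ratio_cutoff p r j" "r \<le> ratio_cutoff p r j" "q_cutoff j \<le> ratio_cutoff p r j"
  "ratio_cutoff p r j < 1/36"
  using q_cutoff_bounds[of j] p r by (auto simp: ratio_cutoff_def)

lemma coincidences_close:
  assumes q1: "q1 \<in> coincidences p r n m j w w'" and q2: "q2 \<in> coincidences p r n m j w w'"
    and w: "length w = k" "length w' = k" and le: "q1 \<le> q2"
  shows "q2 - q1 \<le> ratio_cutoff p r j ^ k"
proof -
  define \<rho> where "\<rho> = ratio_cutoff p r j"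
  have \<rho>: "p \<le> \<rho>" "r \<le> \<rho>" "q_cutoff j \<le> \<rho>" "\<rho> < 1/36"
    unfolding \<rho>_def by (fact ratio_cutoff_bounds)+
  obtain t1 s1 where q1': "0 < q1" "q1 \<le> q_cutoff j" "t1 \<in> {0..1}" "s1 \<in> {0..1}"
    "1/3 \<le> 1 - word_eval (sysq p r q1) w' s1"
    "q1 * p ^ n * word_eval (sysq p r q1) w t1 = r ^ Suc m * (1 - word_eval (sysq p r q1) w' s1)"
    using q1 unfolding coincidences_def by blast
  obtain t2 s2 where q2': "0 < q2" "q2 \<le> q_cutoff j" "t2 \<in> {0..1}" "s2 \<in> {0..1}"
    "1/3 \<le> word_eval (sysq p r q2) w t2"
    "q2 * p ^ n * word_eval (sysq p r q2) w t2 = r ^ Suc m * (1 - word_eval (sysq p r q2) w' s2)"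
    using q2 unfolding coincidences_def by blast
  have q_le: "q1 \<le> \<rho>" "q2 \<le> \<rho>" "q1 < 1/36" using q1'(2) q2'(2) \<rho> by linarith+
  have dist_le: "\<bar>t - t'\<bar> \<le> 1" if "t \<in> {0..1}" "t' \<in> {0..1}" for t t' :: real
    using that by auto
  have perturb: "\<bar>word_eval (sysq p r q1) v t - word_eval (sysq p r q2) v t'\<bar> \<le> 2 * (q2 - q1) + \<rho> ^ k"
    if "length v = k" "t \<in> {0..1}" "t' \<in> {0..1}" for v t t'
  proof -
    have "\<bar>word_eval (sysq p r q1) v t - word_eval (sysq p r q2) v t'\<bar> \<le> 2 * \<bar>q1 - q2\<bar> + \<rho> ^ k * \<bar>t - t'\<bar>"
      using sysq_word_eval_perturbation[where w = v, OF \<rho>(1,2,4) q1'(1) q_le(1) q2'(1) q_le(2) that(2,3)]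
        that(1)
      by simp
    also have "\<dots> \<le> 2 * (q2 - q1) + \<rho> ^ k"
      using le dist_le[OF that(2,3)] \<rho> p mult_left_le[of "\<bar>t - t'\<bar>" "\<rho> ^ k"] by simp
    finally show ?thesis .
  qed
  have a1_le: "word_eval (sysq p r q1) w t1 \<le> 1"
    using word_eval_in_unit[of w "sysq p r q1" t1] sysq_maps_unit q1'(1) q_le(3) q1'(3) by simp
  show ?thesis
    unfolding \<rho>_def[symmetric]
  proof (rule transversality_bound[OF q1'(6) q2'(6) q1'(1) le q_le(3) _ _ a1_le])
    show "0 < p ^ n" "0 \<le> r ^ Suc m" using p r by simp_all
    show "\<bar>word_eval (sysq p r q1) w t1 - word_eval (sysq p r q2) w t2\<bar> \<le> 2 * (q2 - q1) + \<rho> ^ k"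
      using perturb w q1' q2' by simp
    show "\<bar>(1 - word_eval (sysq p r q1) w' s1) - (1 - word_eval (sysq p r q2) w' s2)\<bar>
        \<le> 2 * (q2 - q1) + \<rho> ^ k"
      using perturb[of w' s1 s2] w q1' q2' by (simp add: abs_minus_commute)
  qed (use q1' q2' in simp_all)
qed

lemma coincidences_subset_interval:
  assumes w: "length w = k" "length w' = k"
  shows "coincidences p r n m j w w' \<subseteq>
    {Inf (coincidences p r n m j w w') .. Inf (coincidences p r n m j w w') + ratio_cutoff p r j ^ k}"
    (is "?C \<subseteq> {Inf ?C .. Inf ?C + ?\<rho> ^ k}")
proof
  fix q assume q: "q \<in> ?C"
  have bdd: "bdd_below ?C" unfolding coincidences_def by (rule bdd_belowI[of _ 0]) auto
  have "q - ?\<rho> ^ k \<le> q'" if "q' \<in> ?C" for q'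
  proof (cases "q \<le> q'")
    case True
    have "0 \<le> ?\<rho>" using ratio_cutoff_bounds(2)[of j] r by linarith
    then have "0 \<le> ?\<rho> ^ k" by simp
    with True show ?thesis by linarith
  next
    case False then show ?thesis
      using coincidences_close[of q' n m j w w' q k] that q w by simp
  qed
  then have "q - ?\<rho> ^ k \<le> Inf ?C" using q by (intro cInf_greatest) auto
  then show "q \<in> {Inf ?C .. Inf ?C + ?\<rho> ^ k}"
    using cInf_lower[OF q bdd] by simp
qed

lemma emeasure_coincidence_cover:
  "emeasure lborel (coincidence_cover p r n m j k) \<le> ennreal ((36 * ratio_cutoff p r j) ^ k)"
proof -
  define \<rho> where "\<rho> = ratio_cutoff p r j"
  have \<rho>: "0 \<le> \<rho>" unfolding \<rho>_def using ratio_cutoff_bounds(2)[of j] r by linarith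
  define I where "I w w' = {Inf (coincidences p r n m j w w') .. Inf (coincidences p r n m j w w') + \<rho> ^ k}"
    for w w'
  have "emeasure lborel (coincidence_cover p r n m j k)
      = emeasure lborel (\<Union>(w, w') \<in> sysq_words k \<times> sysq_words k. I w w')"
    unfolding coincidence_cover_def I_def \<rho>_def ..
  also have "\<dots> \<le> (\<Sum>(w, w') \<in> sysq_words k \<times> sysq_words k. emeasure lborel (I w w'))"
  proof -
    have "case_prod I ` (sysq_words k \<times> sysq_words k) \<subseteq> sets lborel" by (auto simp: I_def)
    from emeasure_subadditive_finite[OF _ this] show ?thesis
      by (simp add: finite_sysq_words case_prod_unfold)
  qed
  also have "\<dots> = (\<Sum>(w, w') \<in> sysq_words k \<times> sysq_words k. ennreal (\<rho> ^ k))"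
    unfolding I_def using \<rho> by simp
  also have "\<dots> = of_nat (36 ^ k) * ennreal (\<rho> ^ k)"
    by (simp add: card_cartesian_product card_sysq_words flip: power_mult_distrib)
  also have "\<dots> = ennreal (real (36 ^ k)) * ennreal (\<rho> ^ k)"
    by (simp only: ennreal_of_nat_eq_real_of_nat)
  also have "\<dots> = ennreal ((36 * \<rho>) ^ k)"
    using \<rho> by (simp add: ennreal_mult[symmetric] power_mult_distrib)
  finally show ?thesis unfolding \<rho>_def .
qed

lemma closed_coincidence_cover: "closed (coincidence_cover p r n m j k)"
  unfolding coincidence_cover_def by (intro closed_UN) (auto simp: finite_sysq_words)

lemma coincidence_cover_limit_null: "(\<Inter>k. coincidence_cover p r n m j k) \<in> null_sets lborel"
proof (rule null_setsI)
  show "(\<Inter>k. coincidence_cover p r n m j k) \<in> sets lborel"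
    using closed_coincidence_cover by (simp add: borel_closed closed_INT)
  define \<rho> where "\<rho> = ratio_cutoff p r j"
  have \<rho>: "0 \<le> 36 * \<rho>" "36 * \<rho> < 1"
    unfolding \<rho>_def using ratio_cutoff_bounds[of j] r by linarith+
  have "emeasure lborel (\<Inter>k. coincidence_cover p r n m j k) \<le> 0 + ennreal e" if e: "0 < e" for e
  proof -
    obtain k where k: "(36 * \<rho>) ^ k < e" using real_arch_pow_inv[OF e \<rho>(2)] by blast
    have "emeasure lborel (\<Inter>k. coincidence_cover p r n m j k) \<le> emeasure lborel (coincidence_cover p r n m j k)"
      by (rule emeasure_mono) (auto simp: borel_closed closed_coincidence_cover)
    also have "\<dots> \<le> ennreal ((36 * \<rho>) ^ k)"
      unfolding \<rho>_def by (rule emeasure_coincidence_cover)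
    also have "\<dots> \<le> ennreal e" using k by (intro ennreal_leI) simp
    finally show ?thesis by simp
  qed
  then show "emeasure lborel (\<Inter>k. coincidence_cover p r n m j k) = 0"
    using ennreal_le_epsilon by (metis le_zero_eq)
qed

lemma exceptional_params_null: "exceptional_params p r \<in> null_sets lborel"
  unfolding exceptional_params_def
  by (intro null_sets_UN) (auto simp: coincidence_cover_limit_null split: prod.split)

lemma coincidence_in_exceptional_params:
  assumes q: "0 < q" "q < 1/36"
    and a: "\<And>k. a \<in> ifs_level 6 (sysq p r q) k" "1/3 \<le> a"
    and b: "\<And>k. b \<in> ifs_level 6 (sysq p r q) k" "1/3 \<le> 1 - b"
    and eq: "q * p ^ n * a = r ^ Suc m * (1 - b)"
  shows "q \<in> exceptional_params p r"
proof -
  obtain j where j: "q \<le> q_cutoff j" using exists_q_cutoff q(2) by blast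
  have "q \<in> coincidence_cover p r n m j k" for k
  proof -
    obtain w t where w: "length w = k" "set w \<subseteq> {1..6}" "t \<in> {0..1}" "a = word_eval (sysq p r q) w t"
      using ifs_level_word[OF a(1)] by blast
    obtain w' s where w': "length w' = k" "set w' \<subseteq> {1..6}" "s \<in> {0..1}" "b = word_eval (sysq p r q) w' s"
      using ifs_level_word[OF b(1)] by blast
    have "q \<in> coincidences p r n m j w w'"
      unfolding coincidences_def using q j w w' a(2) b(2) eq by blast
    then have "q \<in> {Inf (coincidences p r n m j w w') ..
        Inf (coincidences p r n m j w w') + ratio_cutoff p r j ^ k}"
      using coincidences_subset_interval[OF w(1) w'(1)] by blast
    moreover have "(w, w') \<in> sysq_words k \<times> sysq_words k" using w w' by (simp add: sysq_words_def)
    ultimately show ?thesis unfolding coincidence_cover_def by blast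
  qed
  then show ?thesis unfolding exceptional_params_def by blast
qed

end

section \<open>The attractor of \<open>sysq\<close>\<close>

locale sysq_system = sysq_params +
  fixes q :: real
  assumes q: "0 < q" "q < 1/36"
begin

sublocale unit_ifs 6 "sysq p r q" "1/36"
  by (rule unit_ifs_sysq[OF q])

lemma ifs_limit_cases:
  assumes "x \<in> ifs_limit 6 (sysq p r q)"
  obtains i z where "i \<in> {1..6}" "z \<in> ifs_limit 6 (sysq p r q)" "x = affc (sysq p r q i) z"
  using assms hutchinson_ifs_limit unfolding hutchinson_def by blast

lemma ifs_limit_descent_at_0:
  assumes "a \<in> ifs_limit 6 (sysq p r q)" "0 < a"
  obtains n a' where "a' \<in> ifs_limit 6 (sysq p r q)" "1/3 \<le> a'" "a = p ^ n * a'"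
proof (rule power_descent[OF ifs_limit_subset_unit p(1) _ _ assms])
  show "p < 1" using p by simp
  fix x assume "x \<in> ifs_limit 6 (sysq p r q)"
  then obtain i z where i: "i \<in> {1..6}" "z \<in> ifs_limit 6 (sysq p r q)" "x = affc (sysq p r q i) z"
    by (rule ifs_limit_cases)
  show "1/3 \<le> x \<or> (\<exists>z\<in>ifs_limit 6 (sysq p r q). x = p * z)"
  proof (cases "i = 1")
    case True
    then have "x = p * z" using i(3) by (simp add: sysq_def affc_def)
    then show ?thesis using i(2) by blast
  next
    case False
    have "z \<in> {0..1}" using i(2) ifs_limit_subset_unit by blast
    then have "piece_lo i \<le> x" using sysq_piece_bounds[OF q, of z i] i(3) by simp
    moreover have "1/3 \<le> piece_lo i" using False by (simp add: piece_lo_def)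
    ultimately show ?thesis by simp
  qed
qed

lemma ifs_limit_descent_at_1:
  assumes "b \<in> ifs_limit 6 (sysq p r q)" "b < 1"
  obtains m b' where "b' \<in> ifs_limit 6 (sysq p r q)" "1/3 \<le> 1 - b'" "1 - b = r ^ m * (1 - b')"
proof -
  let ?K = "(\<lambda>x. 1 - x) ` ifs_limit 6 (sysq p r q)"
  have sub: "?K \<subseteq> {0..1}" using ifs_limit_subset_unit by auto
  have step: "1/3 \<le> y \<or> (\<exists>z\<in>?K. y = r * z)" if "y \<in> ?K" for y
  proof -
    obtain x where x: "x \<in> ifs_limit 6 (sysq p r q)" "y = 1 - x" using \<open>y \<in> ?K\<close> by blast
    obtain i z where i: "i \<in> {1..6}" "z \<in> ifs_limit 6 (sysq p r q)" "x = affc (sysq p r q i) z"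
      using x(1) by (rule ifs_limit_cases)
    show ?thesis
    proof (cases "i = 6")
      case True
      then have "y = r * (1 - z)" using i(3) x(2) by (simp add: sysq_def affc_def algebra_simps)
      then show ?thesis using i(2) by blast
    next
      case False
      have "z \<in> {0..1}" using i(2) ifs_limit_subset_unit by blast
      then have "x \<le> piece_hi i" using sysq_piece_bounds[OF q, of z i] i(3) by simp
      moreover have "piece_hi i \<le> 2/3" using False i(1) by (auto simp: piece_hi_def)
      ultimately show ?thesis using x(2) by simp
    qed
  qed
  have descent: "r < 1" "1 - b \<in> ?K" "0 < 1 - b" using assms r by auto
  obtain m y where y: "y \<in> ?K" "1/3 \<le> y" "1 - b = r ^ m * y"
    using power_descent[OF sub r(1) descent(1) step descent(2,3)] by blast
  then obtain b' where "b' \<in> ifs_limit 6 (sysq p r q)" "y = 1 - b'" by blast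
  then show thesis using that[of b' m] y(2,3) by simp
qed

lemma pieces_3_4_meet_at_half:
  assumes "q \<notin> exceptional_params p r"
  shows "affc (sysq p r q 3) ` ifs_limit 6 (sysq p r q) \<inter> affc (sysq p r q 4) ` ifs_limit 6 (sysq p r q)
    = {1/2}"
proof (intro equalityI subsetI)
  have "0 \<in> ifs_limit 6 (sysq p r q)" by (rule fixed_point_in_ifs_limit[of 1]) (auto simp: sysq_def affc_def)
  then have "1/2 \<in> affc (sysq p r q 3) ` ifs_limit 6 (sysq p r q)"
    by (rule image_eqI[rotated]) (simp add: sysq_def affc_def)
  moreover have "1 \<in> ifs_limit 6 (sysq p r q)" by (rule fixed_point_in_ifs_limit[of 6]) (auto simp: sysq_def affc_def)
  then have "1/2 \<in> affc (sysq p r q 4) ` ifs_limit 6 (sysq p r q)"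
    by (rule image_eqI[rotated]) (simp add: sysq_def affc_def)
  ultimately show "x \<in> affc (sysq p r q 3) ` ifs_limit 6 (sysq p r q) \<inter> affc (sysq p r q 4) ` ifs_limit 6 (sysq p r q)"
    if "x \<in> {1/2}" for x
    using that by (metis IntI singletonD)
next
  fix x assume x: "x \<in> affc (sysq p r q 3) ` ifs_limit 6 (sysq p r q) \<inter> affc (sysq p r q 4) ` ifs_limit 6 (sysq p r q)"
  then obtain a where a: "a \<in> ifs_limit 6 (sysq p r q)" "x = 1/2 - q * a"
    by (auto simp: sysq_def affc_def)
  obtain b where b: "b \<in> ifs_limit 6 (sysq p r q)" "x = 1/2 - r * (1 - b)"
    using x by (auto simp: sysq_def affc_def algebra_simps)
  show "x \<in> {1/2}"
  proof (rule ccontr)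
    assume "x \<notin> {1/2}"
    moreover have "a \<in> {0..1}" using a(1) ifs_limit_subset_unit by blast
    ultimately have "0 < a" using a(2) by fastforce
    then have "0 < r * (1 - b)" using a(2) b(2) q by simp
    then have "b < 1" using r by (simp add: zero_less_mult_iff)
    obtain n a' where a': "a' \<in> ifs_limit 6 (sysq p r q)" "1/3 \<le> a'" "a = p ^ n * a'"
      using ifs_limit_descent_at_0[OF a(1) \<open>0 < a\<close>] .
    obtain m b' where b': "b' \<in> ifs_limit 6 (sysq p r q)" "1/3 \<le> 1 - b'" "1 - b = r ^ m * (1 - b')"
      using ifs_limit_descent_at_1[OF b(1) \<open>b < 1\<close>] .
    have "q * p ^ n * a' = r ^ Suc m * (1 - b')"
      using a(2) b(2) a'(3) b'(3) by (simp add: algebra_simps)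
    then have "q \<in> exceptional_params p r"
      using coincidence_in_exceptional_params[OF q _ a'(2) _ b'(2)] a'(1) b'(1)
      unfolding ifs_limit_def by blast
    then show False using assms by blast
  qed
qed

lemma pieces_disjoint:
  assumes "i \<in> {1..6}" "j \<in> {1..6}" "i \<noteq> j" "{i, j} \<noteq> {3, 4}"
  shows "affc (sysq p r q i) ` ifs_limit 6 (sysq p r q) \<inter> affc (sysq p r q j) ` ifs_limit 6 (sysq p r q) = {}"
proof -
  have bounds: "piece_lo k \<le> affc (sysq p r q k) z \<and> affc (sysq p r q k) z \<le> piece_hi k"
    if "z \<in> ifs_limit 6 (sysq p r q)" for k z
    using sysq_piece_bounds[OF q] that ifs_limit_subset_unit by blast
  have False if "z \<in> ifs_limit 6 (sysq p r q)" "z' \<in> ifs_limit 6 (sysq p r q)"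
    "affc (sysq p r q i) z = affc (sysq p r q j) z'" for z z'
    using bounds[OF that(1), of i] bounds[OF that(2), of j] that(3) piece_intervals_separated[OF assms]
    by linarith
  then show ?thesis by blast
qed

end

lemma (in sysq_params) sysq_pieces_non_weak_separation:
  assumes irr: "ln p / ln r \<notin> \<rat>" and q_mem: "q \<in> {0<..<1/36} - exceptional_params p r"
  shows "let K = attractor 6 (sysq p r q); P = (\<lambda>i. affc (sysq p r q i) ` K) in
    P 3 \<inter> P 4 = {1/2} \<and>
    (\<forall>i\<in>{1..6}. \<forall>j\<in>{1..6}. i \<noteq> j \<and> {i, j} \<noteq> {3, 4} \<longrightarrow> P i \<inter> P j = {}) \<and>
    \<not> weak_separation 6 (sysq p r q)"
proof -
  interpret sysq_system p r q using q_mem by unfold_locales auto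
  show ?thesis
    unfolding Let_def attractor_eq_ifs_limit
    using pieces_3_4_meet_at_half pieces_disjoint sysq_not_weak_separation[OF irr q] q_mem
    by blast
qed

theorem mainTheorem14:
  fixes p r :: real
  assumes "0 < p" "p < 1/36" "0 < r" "r < 1/36"
    and "ln p / ln r \<notin> \<rat>"
  shows "\<exists>N \<in> null_sets lborel. \<forall>q \<in> {0<..<1/36} - N.
     (let K = attractor 6 (sysq p r q); P = (\<lambda>i. affc (sysq p r q i) ` K) in
       P 3 \<inter> P 4 = {1/2} \<and>
       (\<forall>i\<in>{1..6}. \<forall>j\<in>{1..6}. i \<noteq> j \<and> {i, j} \<noteq> {3, 4} \<longrightarrow> P i \<inter> P j = {}) \<and>
       \<not> weak_separation 6 (sysq p r q))"
proof -
  interpret sysq_params p r using assms(1-4) by unfold_locales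
  show ?thesis
    using exceptional_params_null sysq_pieces_non_weak_separation[OF assms(5)] by blast
qed

end
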